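(* Let $0\le k,l\le N$ be integers, let $q$ be a nonzero complex number with $q^j\ne1$ for $1\le j\le N$, and let $t\neq0$. Then $$\binom{N}{l}_q\,t^{k}\;{}_3\phi_2\!\left[\begin{matrix}q^{-k},q^{-l},1/t\\ q^{-N},0\end{matrix};q,q\right]=\sum_{P}q^{\|P\|}\,t^{y_k(P)},$$ where the sum is over all lattice paths $P$ from $(0,0)$ to $(l,N-l)$ with unit right and up steps, $\|P\|$ is the sum, over all up steps of $P$, of the $x$-coordinate of the starting point of that step (the number of boxes to the upper left of the path), and $y_k(P)$ is the number of up steps among the first $k$ steps of $P$.
   Context: $(a;q)_k=\prod_{j=0}^{k-1}(1-aq^j)$, $\binom{N}{l}_q=\frac{(q;q)_N}{(q;q)_l(q;q)_{N-l}}$, and ${}_3\phi_2\!\left[\begin{matrix}a_1,a_2,a_3\\ b_1,b_2\end{matrix};q,z\right]=\sum_{j\ge0}\frac{(a_1,a_2,a_3;q)_j}{(q,b_1,b_2;q)_j}z^j$ (terminating; $(0;q)_j=1$). *)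

theory Defs
  imports Complex_Main
begin

definition qpoch :: "complex \<Rightarrow> complex \<Rightarrow> nat \<Rightarrow> complex" where
  "qpoch a q k = (\<Prod>j<k. 1 - a * q ^ j)"

definition qbinom :: "nat \<Rightarrow> nat \<Rightarrow> complex \<Rightarrow> complex" where
  "qbinom N l q = qpoch q q N / (qpoch q q l * qpoch q q (N - l))"

definition phi32 :: "nat \<Rightarrow> complex \<Rightarrow> complex \<Rightarrow> complex \<Rightarrow> complex \<Rightarrow> complex
    \<Rightarrow> complex \<Rightarrow> complex \<Rightarrow> complex" where
  "phi32 M a1 a2 a3 b1 b2 q z =
     (\<Sum>j\<le>M. (qpoch a1 q j * qpoch a2 q j * qpoch a3 q j)
              / (qpoch q q j * qpoch b1 q j * qpoch b2 q j) * z ^ j)"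

text \<open>Lattice paths from (0,0) to (l, N-l): lists of N steps, True = up step,
  False = right step.\<close>
definition lattice_paths :: "nat \<Rightarrow> nat \<Rightarrow> bool list set" where
  "lattice_paths N l = {P. length P = N \<and> length (filter id P) = N - l}"

definition path_norm :: "bool list \<Rightarrow> nat" where
  "path_norm P = (\<Sum>i<length P. if P ! i then length (filter Not (take i P)) else 0)"

definition y_steps :: "nat \<Rightarrow> bool list \<Rightarrow> nat" where
  "y_steps k P = length (filter id (take k P))"

end

theory Submission
  imports Defs
begin

(* Both sides satisfy the recursion obtained by removing the first step of a path. For the
   path sum F(N,l,k) an up step raises y_k and a right step moves every later up step one unit
   to the right, so F(N+1,l,k+1) = t F(N,l,k) + q^(N+1-l) F(N,l-1,k) (terms dropped at l = N+1 and
   l = 0), while F(N,l,0) is the area generating function [N,l]_q.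
   Term by term, [N,l]_q t^k times the 3phi2 is  sum_j c_j t^(k-j) Q_j(t)  with
   Q_j(t) = prod_(i<j) q^i (q^i - t)  and  c_j = q^(j(N+1-k-l)) [k,j]_q [N-j,l-j]_q.
   Multiplying by t stays in this basis, and t Q_j = q^j Q_j - q^(-j) Q_(j+1) rewrites a
   degree-k expansion in the degree-(k+1) basis; the recursion then reduces, coefficient by
   coefficient, to the q-Pascal rule applied to both Gaussian binomials. *)

fun gauss_binomial :: "nat \<Rightarrow> nat \<Rightarrow> 'a::comm_semiring_1 \<Rightarrow> 'a" where
  "gauss_binomial n 0 q = 1"
| "gauss_binomial 0 (Suc m) q = 0"
| "gauss_binomial (Suc n) (Suc m) q = q ^ (n - m) * gauss_binomial n m q + gauss_binomial n (Suc m) q"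

lemma gauss_binomial_eq_0: "n < m \<Longrightarrow> gauss_binomial n m q = 0"
proof (induction n arbitrary: m)
  case 0
  then show ?case by (cases m) auto
next
  case (Suc n)
  then show ?case by (cases m) auto
qed

lemma qpoch_0 [simp]: "qpoch a q 0 = 1"
  by (simp add: qpoch_def)

lemma qpoch_0_left [simp]: "qpoch 0 q j = 1"
  by (simp add: qpoch_def)

lemma qpoch_Suc: "qpoch a q (Suc n) = qpoch a q n * (1 - a * q ^ n)"
  by (simp add: qpoch_def)

lemma gauss_binomial_mult_qpoch:
  "m \<le> n \<Longrightarrow> gauss_binomial n m q * qpoch q q m * qpoch q q (n - m) = qpoch q q n"
proof (induction n arbitrary: m)
  case 0
  then show ?case by simp
next
  case (Suc n)
  show ?case
  proof (cases m)
    case 0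
    then show ?thesis by simp
  next
    case (Suc m')
    with Suc.prems have "m' \<le> n" by simp
    have up: "gauss_binomial n (Suc m') q * qpoch q q (Suc m') * qpoch q q (n - m')
        = qpoch q q n * (1 - q ^ (n - m'))"
    proof (cases "m' = n")
      case True
      then show ?thesis by (simp add: gauss_binomial_eq_0)
    next
      case False
      with \<open>m' \<le> n\<close> have n_m': "n - m' = Suc (n - Suc m')" by simp
      have "gauss_binomial n (Suc m') q * qpoch q q (Suc m') * qpoch q q (n - m')
          = (gauss_binomial n (Suc m') q * qpoch q q (Suc m') * qpoch q q (n - Suc m'))
            * (1 - q ^ (n - m'))"
        unfolding n_m' qpoch_Suc[of q q "n - Suc m'"] by (simp add: mult_ac)
      then show ?thesis
        using Suc.IH[of "Suc m'"] False \<open>m' \<le> n\<close> by simp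
    qed
    have down: "gauss_binomial n m' q * qpoch q q (Suc m') * qpoch q q (n - m')
        = qpoch q q n * (1 - q ^ Suc m')"
      using Suc.IH[OF \<open>m' \<le> n\<close>] by (simp add: qpoch_Suc mult_ac)
    have "gauss_binomial (Suc n) m q * qpoch q q m * qpoch q q (Suc n - m)
        = q ^ (n - m') * (gauss_binomial n m' q * qpoch q q (Suc m') * qpoch q q (n - m'))
          + gauss_binomial n (Suc m') q * qpoch q q (Suc m') * qpoch q q (n - m')"
      by (simp add: \<open>m = Suc m'\<close> algebra_simps)
    also have "\<dots> = qpoch q q n * (1 - q ^ (n - m') * q ^ Suc m')"
      unfolding down up by (simp add: algebra_simps)
    also have "q ^ (n - m') * q ^ Suc m' = q ^ Suc n"
      using \<open>m' \<le> n\<close> by (simp flip: power_add)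
    finally show ?thesis
      by (simp add: qpoch_Suc)
  qed
qed

lemma finite_lattice_paths: "finite (lattice_paths N l)"
proof (rule finite_subset)
  show "lattice_paths N l \<subseteq> {P. set P \<subseteq> UNIV \<and> length P = N}"
    by (auto simp: lattice_paths_def)
qed (rule finite_lists_length_eq, simp)

lemma sum_if_nth_eq_length_filter:
  "(\<Sum>i<length P. if P ! i then 1 else 0) = length (filter id P)"
  unfolding length_filter_conv_card
  by (simp add: sum.If_cases) (rule arg_cong[where f = card], auto)

lemma path_norm_Cons:
  "path_norm (b # P) = path_norm P + (if b then 0 else length (filter id P))"
proof -
  have "path_norm (b # P) = (\<Sum>i<length P. if P ! i then (if b then 0 else 1)
      + length (filter Not (take i P)) else 0)"
    unfolding path_norm_def
    by (simp add: sum.lessThan_Suc_shift cong: if_cong del: sum.lessThan_Suc)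
  also have "\<dots> = path_norm P + (if b then 0 else 1) * (\<Sum>i<length P. if P ! i then 1 else 0)"
    unfolding path_norm_def sum_distrib_left sum.distrib[symmetric] by (rule sum.cong) auto
  finally show ?thesis
    by (simp add: sum_if_nth_eq_length_filter)
qed

lemma y_steps_0 [simp]: "y_steps 0 P = 0"
  by (simp add: y_steps_def)

lemma y_steps_Cons: "y_steps (Suc k) (b # P) = (if b then Suc (y_steps k P) else y_steps k P)"
  by (simp add: y_steps_def)

lemma lattice_paths_Suc:
  assumes "l \<le> Suc N"
  shows "lattice_paths (Suc N) l
    = Cons True ` {P \<in> lattice_paths N l. l \<le> N} \<union> Cons False ` {P \<in> lattice_paths N (l - 1). 0 < l}"
proof (intro equalityI subsetI)
  fix P assume "P \<in> lattice_paths (Suc N) l"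
  then obtain b P' where "P = b # P'" "length P' = N"
    and "length (filter id (b # P')) = Suc N - l"
    by (cases P) (auto simp: lattice_paths_def)
  with assms show "P \<in> Cons True ` {P \<in> lattice_paths N l. l \<le> N}
      \<union> Cons False ` {P \<in> lattice_paths N (l - 1). 0 < l}"
    using length_filter_le[of id P'] by (cases b) (auto simp: lattice_paths_def)
qed (use assms in \<open>auto simp: lattice_paths_def\<close>)

lemma sum_lattice_paths_Suc:
  assumes "l \<le> Suc N"
  shows "(\<Sum>P\<in>lattice_paths (Suc N) l. f P)
    = (if l \<le> N then \<Sum>P\<in>lattice_paths N l. f (True # P) else 0)
      + (if l = 0 then 0 else \<Sum>P\<in>lattice_paths N (l - 1). f (False # P))"
  unfolding lattice_paths_Suc[OF assms]
  by (subst sum.union_disjoint) (auto simp: sum.reindex finite_lattice_paths)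

definition path_gf :: "nat \<Rightarrow> nat \<Rightarrow> nat \<Rightarrow> 'a::comm_semiring_1 \<Rightarrow> 'a \<Rightarrow> 'a" where
  "path_gf N l k q t = (\<Sum>P\<in>lattice_paths N l. q ^ path_norm P * t ^ y_steps k P)"

lemma path_norm_False_Cons:
  "0 < l \<Longrightarrow> l \<le> Suc N \<Longrightarrow> P \<in> lattice_paths N (l - 1)
    \<Longrightarrow> path_norm (False # P) = path_norm P + (Suc N - l)"
  by (simp add: path_norm_Cons lattice_paths_def)

lemma path_gf_Suc_0:
  assumes "l \<le> Suc N"
  shows "path_gf (Suc N) l 0 q t = (if l \<le> N then path_gf N l 0 q t else 0)
    + (if l = 0 then 0 else q ^ (Suc N - l) * path_gf N (l - 1) 0 q t)"
  unfolding path_gf_def sum_lattice_paths_Suc[OF assms] sum_distrib_left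
  using path_norm_False_Cons[OF _ assms]
  by (auto simp: path_norm_Cons power_add mult_ac intro!: sum.cong)

lemma path_gf_Suc:
  assumes "l \<le> Suc N"
  shows "path_gf (Suc N) l (Suc k) q t = (if l \<le> N then t * path_gf N l k q t else 0)
    + (if l = 0 then 0 else q ^ (Suc N - l) * path_gf N (l - 1) k q t)"
  unfolding path_gf_def sum_lattice_paths_Suc[OF assms] sum_distrib_left
  using path_norm_False_Cons[OF _ assms]
  by (auto simp: path_norm_Cons y_steps_Cons power_add mult_ac intro!: sum.cong)

lemma path_gf_0: "l \<le> N \<Longrightarrow> path_gf N l 0 q t = gauss_binomial N l q"
proof (induction N arbitrary: l)
  case 0
  then have "lattice_paths 0 l = {[]}"
    by (auto simp: lattice_paths_def)
  with 0 show ?case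
    by (simp add: path_gf_def path_norm_def)
next
  case (Suc N)
  then show ?case
    by (cases l) (auto simp: path_gf_Suc_0 gauss_binomial_eq_0 add_ac)
qed

definition qprod :: "nat \<Rightarrow> 'a::field \<Rightarrow> 'a \<Rightarrow> 'a" where
  "qprod j q t = (\<Prod>i<j. q ^ i * (q ^ i - t))"

definition qprod_sum :: "nat \<Rightarrow> (nat \<Rightarrow> 'a) \<Rightarrow> 'a::field \<Rightarrow> 'a \<Rightarrow> 'a" where
  "qprod_sum k a q t = (\<Sum>j\<le>k. a j * t ^ (k - j) * qprod j q t)"

lemma qprod_Suc: "qprod (Suc j) q t = q ^ j * (q ^ j - t) * qprod j q t"
  by (simp add: qprod_def)

lemma qprod_split:
  assumes "q \<noteq> 0"
  shows "qprod j q t = q powi (- int j) * t * qprod j q t + q powi (- 2 * int j) * qprod (Suc j) q t"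
proof -
  define p where "p = q powi (- int j)"
  have inv: "p * q ^ j = 1"
    using assms by (simp add: p_def power_int_minus)
  have "q powi (- 2 * int j) = p * p"
    using assms by (simp add: p_def flip: power_int_add)
  then have "q powi (- 2 * int j) * qprod (Suc j) q t
      = (p * q ^ j) * (p * q ^ j - p * t) * qprod j q t"
    by (simp add: qprod_Suc algebra_simps)
  also have "\<dots> = qprod j q t - p * t * qprod j q t"
    by (simp add: inv algebra_simps)
  finally show ?thesis
    unfolding p_def by simp
qed

lemma qprod_sum_Suc_times:
  assumes "a (Suc k) = 0"
  shows "t * qprod_sum k a q t = qprod_sum (Suc k) a q t"
  unfolding qprod_sum_def sum_distrib_left using assms
  by (auto simp: Suc_diff_le mult_ac intro!: sum.cong)

lemma qprod_sum_raise:
  assumes "q \<noteq> 0" and "a (Suc k) = 0"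
  shows "qprod_sum k a q t = qprod_sum (Suc k)
    (\<lambda>j. q powi (- int j) * a j + (case j of 0 \<Rightarrow> 0 | Suc i \<Rightarrow> q powi (- 2 * int i) * a i)) q t"
proof -
  have "qprod_sum k a q t = (\<Sum>j\<le>k. q powi (- int j) * a j * t ^ (Suc k - j) * qprod j q t)
      + (\<Sum>j\<le>k. q powi (- 2 * int j) * a j * t ^ (Suc k - Suc j) * qprod (Suc j) q t)"
    unfolding qprod_sum_def sum.distrib[symmetric]
  proof (rule sum.cong)
    fix j assume "j \<in> {..k}"
    then have "t ^ (Suc k - j) = t * t ^ (k - j)"
      by (simp add: Suc_diff_le)
    moreover note qprod_split[OF assms(1), of j t]
    ultimately show "a j * t ^ (k - j) * qprod j q t
        = q powi (- int j) * a j * t ^ (Suc k - j) * qprod j q t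
          + q powi (- 2 * int j) * a j * t ^ (Suc k - Suc j) * qprod (Suc j) q t"
      by (metis (no_types, lifting) diff_Suc_Suc distrib_left mult.assoc mult.left_commute)
  qed simp
  also have "(\<Sum>j\<le>k. q powi (- int j) * a j * t ^ (Suc k - j) * qprod j q t)
      = (\<Sum>j\<le>Suc k. q powi (- int j) * a j * t ^ (Suc k - j) * qprod j q t)"
    using assms(2) by simp
  also have "(\<Sum>j\<le>k. q powi (- 2 * int j) * a j * t ^ (Suc k - Suc j) * qprod (Suc j) q t)
      = (\<Sum>j\<le>Suc k. (case j of 0 \<Rightarrow> 0 | Suc i \<Rightarrow> q powi (- 2 * int i) * a i)
          * t ^ (Suc k - j) * qprod j q t)"
    by (simp add: sum.atMost_Suc_shift del: sum.atMost_Suc)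
  finally show ?thesis
    by (simp add: qprod_sum_def sum.distrib[symmetric] algebra_simps)
qed

(* Without the guard, the truncated l - j would turn the second factor into 1 for j > l. *)
definition phi32_coeff :: "nat \<Rightarrow> nat \<Rightarrow> nat \<Rightarrow> nat \<Rightarrow> 'a::field \<Rightarrow> 'a" where
  "phi32_coeff N l k j q = (if j \<le> l then q powi (int j * (int N + 1 - int l - int k))
     * gauss_binomial k j q * gauss_binomial (N - j) (l - j) q else 0)"

lemma gauss_binomial_diff_Suc:
  assumes "j \<le> l" and "l \<le> N"
  shows "gauss_binomial (N - j) (l - j) q
    = (if j < l then q ^ (N - l) * gauss_binomial (N - Suc j) (l - Suc j) q else 0)
      + gauss_binomial (N - Suc j) (l - j) q"
proof (cases "j < l")
  case True
  then have "N - j = Suc (N - Suc j)" "l - j = Suc (l - Suc j)" "N - Suc j - (l - Suc j) = N - l"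
    using assms(2) by auto
  with True show ?thesis
    by simp
qed (use assms(1) in simp)

lemma phi32_coeff_Suc_Suc:
  assumes "q \<noteq> 0" and "l \<le> N" and "j \<le> k"
  shows "phi32_coeff (Suc N) (Suc l) (Suc k) (Suc j) q
    = phi32_coeff N (Suc l) k (Suc j) q
      + q ^ (N - l) * (q powi (- int (Suc j)) * phi32_coeff N l k (Suc j) q
                       + q powi (- 2 * int j) * phi32_coeff N l k j q)"
proof (cases "j \<le> l")
  case False
  then show ?thesis by (simp add: phi32_coeff_def)
next
  case True
  define E where "E = int (Suc j) * (int N - int l - int k)"
  define b where "b = gauss_binomial (N - j) (l - j) q"
  have pow_c1: "q powi (int (Suc j) * (int (Suc N) + 1 - int (Suc l) - int (Suc k))) = q powi E"
    by (simp add: E_def algebra_simps)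
  have pow_c2: "q powi (int (Suc j) * (int N + 1 - int (Suc l) - int k)) = q powi E"
    by (simp add: E_def algebra_simps)
  have pow_c3: "q ^ (N - l) * q powi (- int (Suc j)) * q powi (int (Suc j) * (int N + 1 - int l - int k))
      = q powi E * q ^ (N - l)"
    using assms by (simp add: E_def algebra_simps of_nat_diff flip: power_int_of_nat power_int_add)
  have pow_c4: "q ^ (N - l) * q powi (- 2 * int j) * q powi (int j * (int N + 1 - int l - int k))
      = q powi E * q ^ (k - j)"
    using assms by (simp add: E_def algebra_simps of_nat_diff flip: power_int_of_nat power_int_add)
  have c1: "phi32_coeff (Suc N) (Suc l) (Suc k) (Suc j) q
      = q powi E * (q ^ (k - j) * gauss_binomial k j q + gauss_binomial k (Suc j) q) * b"
    using True unfolding phi32_coeff_def pow_c1 by (simp add: b_def)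
  have c2: "phi32_coeff N (Suc l) k (Suc j) q
      = q powi E * gauss_binomial k (Suc j) q * gauss_binomial (N - Suc j) (l - j) q"
    using True unfolding phi32_coeff_def pow_c2 by simp
  have c3: "q ^ (N - l) * (q powi (- int (Suc j)) * phi32_coeff N l k (Suc j) q)
      = q powi E * gauss_binomial k (Suc j) q
        * (if j < l then q ^ (N - l) * gauss_binomial (N - Suc j) (l - Suc j) q else 0)"
    using pow_c3 by (auto simp: phi32_coeff_def mult_ac)
  have c4: "q ^ (N - l) * (q powi (- 2 * int j) * phi32_coeff N l k j q)
      = q powi E * q ^ (k - j) * gauss_binomial k j q * b"
    using pow_c4 True by (simp add: phi32_coeff_def b_def mult_ac)
  show ?thesis
    unfolding c1 c2 distrib_left c3 c4 b_def gauss_binomial_diff_Suc[OF True assms(2)]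
    by (simp add: algebra_simps)
qed

definition phi32_poly :: "nat \<Rightarrow> nat \<Rightarrow> nat \<Rightarrow> 'a::field \<Rightarrow> 'a \<Rightarrow> 'a" where
  "phi32_poly N l k q t = qprod_sum k (\<lambda>j. phi32_coeff N l k j q) q t"

lemma phi32_poly_0: "phi32_poly N l 0 q t = gauss_binomial N l q"
  by (simp add: phi32_poly_def qprod_sum_def phi32_coeff_def qprod_def)

lemma phi32_coeff_eq_0: "k < j \<Longrightarrow> phi32_coeff N l k j q = 0"
  by (simp add: phi32_coeff_def gauss_binomial_eq_0)

lemma phi32_poly_Suc_0: "phi32_poly (Suc N) 0 (Suc k) q t = t * phi32_poly N 0 k q t"
proof -
  have "phi32_coeff (Suc N) 0 (Suc k) j q = phi32_coeff N 0 k j q" for j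
    by (simp add: phi32_coeff_def)
  then show ?thesis
    unfolding phi32_poly_def by (simp add: qprod_sum_Suc_times phi32_coeff_eq_0)
qed

lemma phi32_poly_Suc_Suc:
  assumes "q \<noteq> 0" and "l \<le> N"
  shows "phi32_poly (Suc N) (Suc l) (Suc k) q t
    = t * phi32_poly N (Suc l) k q t + q ^ (N - l) * phi32_poly N l k q t"
proof -
  have "phi32_coeff (Suc N) (Suc l) (Suc k) j q = phi32_coeff N (Suc l) k j q
      + q ^ (N - l) * (q powi (- int j) * phi32_coeff N l k j q
        + (case j of 0 \<Rightarrow> 0 | Suc i \<Rightarrow> q powi (- 2 * int i) * phi32_coeff N l k i q))"
    if "j \<le> Suc k" for j
  proof (cases j)
    case 0
    then show ?thesis by (simp add: phi32_coeff_def)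
  next
    case (Suc i)
    then show ?thesis
      using phi32_coeff_Suc_Suc[OF assms, of i k] that by simp
  qed
  note coeff = this
  have t_part: "t * phi32_poly N (Suc l) k q t = qprod_sum (Suc k) (\<lambda>j. phi32_coeff N (Suc l) k j q) q t"
    unfolding phi32_poly_def by (rule qprod_sum_Suc_times) (simp add: phi32_coeff_eq_0)
  have q_part: "phi32_poly N l k q t = qprod_sum (Suc k) (\<lambda>j. q powi (- int j) * phi32_coeff N l k j q
      + (case j of 0 \<Rightarrow> 0 | Suc i \<Rightarrow> q powi (- 2 * int i) * phi32_coeff N l k i q)) q t"
    unfolding phi32_poly_def by (rule qprod_sum_raise[OF assms(1)]) (simp add: phi32_coeff_eq_0)
  have "t * phi32_poly N (Suc l) k q t + q ^ (N - l) * phi32_poly N l k q t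
      = phi32_poly (Suc N) (Suc l) (Suc k) q t"
    unfolding t_part q_part
    unfolding phi32_poly_def qprod_sum_def sum_distrib_left sum.distrib[symmetric]
    by (rule sum.cong) (simp_all add: coeff algebra_simps)
  then show ?thesis ..
qed

lemma phi32_poly_eq_0: "k \<le> N \<Longrightarrow> phi32_poly N (Suc N) k q t = 0"
  by (auto simp: phi32_poly_def qprod_sum_def phi32_coeff_def gauss_binomial_eq_0 intro!: sum.neutral)

lemma phi32_poly_Suc:
  assumes "q \<noteq> 0" and "l \<le> Suc N" and "k \<le> N"
  shows "phi32_poly (Suc N) l (Suc k) q t = (if l \<le> N then t * phi32_poly N l k q t else 0)
    + (if l = 0 then 0 else q ^ (Suc N - l) * phi32_poly N (l - 1) k q t)"
proof (cases l)
  case 0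
  then show ?thesis by (simp add: phi32_poly_Suc_0)
next
  case (Suc l')
  with assms show ?thesis
    by (cases "l' = N") (auto simp: phi32_poly_Suc_Suc phi32_poly_eq_0)
qed

lemma path_gf_eq_phi32_poly:
  "(q::'a::field) \<noteq> 0 \<Longrightarrow> k \<le> N \<Longrightarrow> l \<le> N \<Longrightarrow> path_gf N l k q t = phi32_poly N l k q t"
proof (induction k arbitrary: N l)
  case 0
  then show ?case by (simp add: path_gf_0 phi32_poly_0)
next
  case (Suc k)
  then obtain N' where "N = Suc N'" "k \<le> N'"
    by (cases N) auto
  with Suc show ?case
    by (simp add: path_gf_Suc phi32_poly_Suc)
qed

lemma qpoch_q_q_neq_0:
  assumes "\<And>j. 1 \<le> j \<Longrightarrow> j \<le> N \<Longrightarrow> q ^ j \<noteq> 1" and "m \<le> N"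
  shows "qpoch q q m \<noteq> 0"
  using assms by (auto simp: qpoch_def simp flip: power_Suc)

lemma gauss_binomial_eq_qpoch_ratio:
  assumes "\<And>j. 1 \<le> j \<Longrightarrow> j \<le> N \<Longrightarrow> q ^ j \<noteq> 1" and "m \<le> n" and "n \<le> N"
  shows "gauss_binomial n m q = qpoch q q n / (qpoch q q m * qpoch q q (n - m))"
  using gauss_binomial_mult_qpoch[OF assms(2), of q] assms
    qpoch_q_q_neq_0[OF assms(1), of m] qpoch_q_q_neq_0[OF assms(1), of "n - m"]
  by (simp add: field_simps)

lemma prod_one_minus_power_diff:
  "j \<le> n \<Longrightarrow> (\<Prod>i<j. 1 - q ^ (n - i)) * qpoch q q (n - j) = qpoch q q n"
proof (induction j)
  case 0
  then show ?case by simp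
next
  case (Suc j)
  then have "n - j = Suc (n - Suc j)"
    by simp
  with Suc show ?case
    by (simp add: qpoch_Suc mult_ac)
qed

lemma qpoch_inverse_power:
  assumes "q \<noteq> 0" and "j \<le> n"
  shows "qpoch (inverse (q ^ n)) q j * qpoch q q (n - j)
    = (-1) ^ j * q powi (- int (n * j)) * (\<Prod>i<j. q ^ i) * qpoch q q n"
proof -
  define c where "c = - inverse (q ^ n)"
  have factor: "1 - inverse (q ^ n) * q ^ i = c * (q ^ i * (1 - q ^ (n - i)))" if "i < j" for i
  proof -
    have "q ^ i * q ^ (n - i) = q ^ n"
      using that assms(2) by (simp flip: power_add)
    then have "inverse (q ^ n) * q ^ i * q ^ (n - i) = 1"
      using assms(1) by (simp add: mult.assoc)
    then show ?thesis
      by (simp add: c_def algebra_simps)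
  qed
  have "qpoch (inverse (q ^ n)) q j = (\<Prod>i<j. c * (q ^ i * (1 - q ^ (n - i))))"
    unfolding qpoch_def by (rule prod.cong) (simp_all add: factor)
  also have "\<dots> = c ^ j * (\<Prod>i<j. q ^ i) * (\<Prod>i<j. 1 - q ^ (n - i))"
    by (simp add: prod.distrib mult.assoc)
  also have "c ^ j = (-1) ^ j * q powi (- int (n * j))"
  proof -
    have "c ^ j = (-1) ^ j * inverse (q ^ n) ^ j"
      unfolding c_def by (rule power_minus)
    also have "inverse (q ^ n) ^ j = q powi (- int (n * j))"
      by (metis power_int_minus power_int_of_nat power_inverse power_mult)
    finally show ?thesis .
  qed
  finally show ?thesis
    using prod_one_minus_power_diff[OF assms(2), of q] by (simp add: mult.assoc)
qed

lemma qpoch_inverse_power_eq_0: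
  assumes "q \<noteq> 0" and "n < j"
  shows "qpoch (inverse (q ^ n)) q j = 0"
  using assms by (auto simp: qpoch_def intro!: bexI[of _ n])

lemma qpoch_inverse_eq_qprod:
  assumes "t \<noteq> 0"
  shows "(\<Prod>i<j. q ^ i) * t ^ j * qpoch (1 / t) q j = (-1) ^ j * qprod j q t"
proof -
  have "(\<Prod>i<j. q ^ i) * t ^ j * qpoch (1 / t) q j = (\<Prod>i<j. q ^ i * t * (1 - 1 / t * q ^ i))"
    unfolding qpoch_def prod.distrib by simp
  also have "\<dots> = (\<Prod>i<j. (-1) * (q ^ i * (q ^ i - t)))"
    using assms by (intro prod.cong) (simp_all add: field_simps)
  also have "\<dots> = (-1) ^ j * qprod j q t"
    unfolding qprod_def prod.distrib by simp
  finally show ?thesis .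
qed

lemma phi32_ratio_eq:
  fixes q t :: complex
  assumes nz: "\<And>j. 1 \<le> j \<Longrightarrow> j \<le> N \<Longrightarrow> q ^ j \<noteq> 1"
    and q: "q \<noteq> 0" and t: "t \<noteq> 0" and "j \<le> k" and "j \<le> l" and "k \<le> N" and "l \<le> N"
  shows "qpoch (inverse (q ^ k)) q j * qpoch (inverse (q ^ l)) q j * qpoch (1 / t) q j
        / (qpoch q q j * qpoch (inverse (q ^ N)) q j) * q ^ j
    = q powi (int j * (int N + 1 - int l - int k))
      * (qpoch q q k * qpoch q q l * qpoch q q (N - j))
      / (qpoch q q (k - j) * qpoch q q (l - j) * qpoch q q j * qpoch q q N) * qprod j q t / t ^ j"
proof -
  define a where "a m = qpoch q q m" for m
  define \<pi> where "\<pi> = (\<Prod>i<j. q ^ i)"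
  define s where "s = (-1 :: complex) ^ j"
  define X where "X = q powi (- int (N * j))"
  have a: "a m \<noteq> 0" if "m \<le> N" for m
    using qpoch_q_q_neq_0[OF nz that] by (simp add: a_def)
  have "\<pi> \<noteq> 0" "s * s = 1" "X \<noteq> 0"
    using q by (simp_all add: \<pi>_def s_def X_def flip: power_add mult_2)
  have inv: "qpoch (inverse (q ^ n)) q j = s * q powi (- int (n * j)) * \<pi> * a n / a (n - j)"
    if "j \<le> n" "n \<le> N" for n
    using qpoch_inverse_power[OF q that(1)] a[of "n - j"] that
    by (simp add: a_def s_def \<pi>_def field_simps)
  have C: "qpoch (1 / t) q j = s * qprod j q t / (\<pi> * t ^ j)"
    using qpoch_inverse_eq_qprod[OF t, of q j] \<open>\<pi> \<noteq> 0\<close> t by (simp add: s_def \<pi>_def field_simps)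
  have pow: "q powi (- int (k * j)) * q powi (- int (l * j)) * q ^ j
      = q powi (int j * (int N + 1 - int l - int k)) * X"
    using q by (simp add: X_def algebra_simps flip: power_int_add power_int_of_nat)
  have "j \<le> N"
    using assms by simp
  have "qpoch (inverse (q ^ k)) q j * qpoch (inverse (q ^ l)) q j * qpoch (1 / t) q j
        / (qpoch q q j * qpoch (inverse (q ^ N)) q j) * q ^ j
      = (s * s) * (q powi (- int (k * j)) * q powi (- int (l * j)) * q ^ j) / X
        * (a k * a l * a (N - j)) / (a (k - j) * a (l - j) * a j * a N) * qprod j q t / t ^ j"
    unfolding inv[OF \<open>j \<le> k\<close> \<open>k \<le> N\<close>] inv[OF \<open>j \<le> l\<close> \<open>l \<le> N\<close>] inv[OF \<open>j \<le> N\<close> order.refl] C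
    using assms a[of j] a[of N] a[of "k - j"] a[of "l - j"] a[of "N - j"] \<open>\<pi> \<noteq> 0\<close> \<open>X \<noteq> 0\<close>
    by (simp add: X_def a_def field_simps)
  then show ?thesis
    unfolding pow \<open>s * s = 1\<close> using \<open>X \<noteq> 0\<close> by (simp add: a_def)
qed

lemma phi32_term_eq_phi32_coeff:
  fixes q t :: complex
  assumes nz: "\<And>j. 1 \<le> j \<Longrightarrow> j \<le> N \<Longrightarrow> q ^ j \<noteq> 1"
    and q: "q \<noteq> 0" and t: "t \<noteq> 0" and "k \<le> N" and "l \<le> N" and "j \<le> k"
  shows "qbinom N l q * t ^ k *
      (qpoch (inverse (q ^ k)) q j * qpoch (inverse (q ^ l)) q j * qpoch (1 / t) q j
        / (qpoch q q j * qpoch (inverse (q ^ N)) q j * qpoch 0 q j) * q ^ j)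
    = phi32_coeff N l k j q * t ^ (k - j) * qprod j q t"
proof (cases "j \<le> l")
  case False
  then show ?thesis
    by (simp add: phi32_coeff_def qpoch_inverse_power_eq_0[OF q])
next
  case True
  define a where "a m = qpoch q q m" for m
  have "a m \<noteq> 0" if "m \<le> N" for m
    using qpoch_q_q_neq_0[OF nz that] by (simp add: a_def)
  then have nonzero: "a N \<noteq> 0" "a l \<noteq> 0" "a (N - l) \<noteq> 0" "a j \<noteq> 0" "a (k - j) \<noteq> 0"
    "a (l - j) \<noteq> 0" "a (N - j) \<noteq> 0"
    using assms by simp_all
  have qbinom: "qbinom N l q = a N / (a l * a (N - l))"
    by (simp add: qbinom_def a_def)
  have gauss_k: "gauss_binomial k j q = a k / (a j * a (k - j))"
    using gauss_binomial_eq_qpoch_ratio[OF nz] assms by (simp add: a_def)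
  have gauss_N: "gauss_binomial (N - j) (l - j) q = a (N - j) / (a (l - j) * a (N - l))"
    using gauss_binomial_eq_qpoch_ratio[OF nz, where m = "l - j" and n = "N - j"] True assms
    by (simp add: a_def)
  have t_pow: "t ^ k = t ^ (k - j) * t ^ j"
    using assms by (simp flip: power_add)
  have ratio: "qpoch (inverse (q ^ k)) q j * qpoch (inverse (q ^ l)) q j * qpoch (1 / t) q j
        / (qpoch q q j * qpoch (inverse (q ^ N)) q j * qpoch 0 q j) * q ^ j
      = q powi (int j * (int N + 1 - int l - int k))
        * (a k * a l * a (N - j)) / (a (k - j) * a (l - j) * a j * a N) * qprod j q t / t ^ j"
    using phi32_ratio_eq[OF nz q t \<open>j \<le> k\<close> True assms(4,5)] by (simp add: a_def)
  show ?thesis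
    unfolding ratio qbinom t_pow gauss_k gauss_N phi32_coeff_def if_P[OF True]
    using nonzero t by (simp add: field_simps)
qed

theorem mainTheorem11:
  fixes N k l :: nat and q t :: complex
  assumes "k \<le> N" and "l \<le> N"
    and "q \<noteq> 0" and "\<And>j. 1 \<le> j \<Longrightarrow> j \<le> N \<Longrightarrow> q ^ j \<noteq> 1"
    and "t \<noteq> 0"
  shows "qbinom N l q * t ^ k *
           phi32 k (inverse (q ^ k)) (inverse (q ^ l)) (1 / t) (inverse (q ^ N)) 0 q q
         = (\<Sum>P\<in>lattice_paths N l. q ^ path_norm P * t ^ y_steps k P)"
proof -
  have "qbinom N l q * t ^ k *
          phi32 k (inverse (q ^ k)) (inverse (q ^ l)) (1 / t) (inverse (q ^ N)) 0 q q
      = (\<Sum>j\<le>k. phi32_coeff N l k j q * t ^ (k - j) * qprod j q t)"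
    unfolding phi32_def sum_distrib_left
    by (intro sum.cong refl phi32_term_eq_phi32_coeff[OF assms(4,3,5,1,2)]) simp_all
  also have "\<dots> = phi32_poly N l k q t"
    by (simp add: phi32_poly_def qprod_sum_def)
  also have "\<dots> = path_gf N l k q t"
    using path_gf_eq_phi32_poly[OF assms(3,1,2)] by simp
  finally show ?thesis
    by (simp add: path_gf_def)
qed

end
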